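(* Let $X_1,X_2,B_1,B_2$ be topological spaces with continuous maps $f\colon X_1\to X_2$, $r_1\colon X_1\to B_1$, $r_2\colon X_2\to B_2$, $f_0\colon B_1\to B_2$ such that $r_2\circ f=f_0\circ r_1$, where $B_1,B_2$ are locally compact Hausdorff and $f_0$ is proper. Let $\tilde f\colon\beta_{B_1}X_1\to\beta_{B_2}X_2$ be the unique continuous map with $\tilde f\circ i_1=i_2\circ f$ and $\beta_{B_2}r_2\circ\tilde f=f_0\circ\beta_{B_1}r_1$. If $f$ is a homeomorphism, then so is $\tilde f$.
   Context: For a locally compact Hausdorff space $B$ and a space $X$ with continuous $r\colon X\to B$, let $H_X\subseteq\mathrm{C_b}(X)$ be the closed linear span of products $u\cdot(v\circ r)$, $u\in\mathrm{C_b}(X)$, $v\in\mathrm C_0(B)$. The relative Stone--Čech compactification $\beta_BX$ is the spectrum of the commutative C*-algebra $H_X$; $i\colon X\to\beta_BX$ sends $x$ to evaluation at $x$; $\beta_Br\colon\beta_BX\to B$ is the unique continuous map with $\beta_Br\circ i=r$. The map $\tilde f$ exists and is unique; $i_j$ denotes the canonical map for $(X_j,r_j)$. *)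

theory Defs
  imports "HOL-Analysis.Analysis"
begin

definition Cb :: "'a topology \<Rightarrow> ('a \<Rightarrow> complex) set" where
  "Cb X = {u. continuous_map X euclidean u \<and> (\<exists>M. \<forall>x\<in>topspace X. norm (u x) \<le> M)
              \<and> (\<forall>x. x \<notin> topspace X \<longrightarrow> u x = 0)}"

definition C0 :: "'b topology \<Rightarrow> ('b \<Rightarrow> complex) set" where
  "C0 B = {v. continuous_map B euclidean v
              \<and> (\<forall>e>0. compactin B {b \<in> topspace B. norm (v b) \<ge> e})
              \<and> (\<forall>b. b \<notin> topspace B \<longrightarrow> v b = 0)}"

text \<open>H_X: closure (in sup norm) of the linear span of the products u * (v o r).\<close>
definition HX :: "'a topology \<Rightarrow> ('a \<Rightarrow> 'b) \<Rightarrow> 'b topology \<Rightarrow> ('a \<Rightarrow> complex) set" where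
  "HX X r B = {h \<in> Cb X. \<forall>e>0. \<exists>(n::nat) u v. (\<forall>i<n. u i \<in> Cb X \<and> v i \<in> C0 B) \<and>
       (\<forall>x\<in>topspace X. norm (h x - (\<Sum>i<n. u i x * v i (r x))) < e)}"

definition chars :: "'a topology \<Rightarrow> ('a \<Rightarrow> 'b) \<Rightarrow> 'b topology \<Rightarrow> (('a \<Rightarrow> complex) \<Rightarrow> complex) set" where
  "chars X r B = {\<phi> \<in> PiE (HX X r B) (\<lambda>_. UNIV).
      (\<forall>h\<in>HX X r B. \<forall>g\<in>HX X r B. \<phi> (\<lambda>x. h x + g x) = \<phi> h + \<phi> g
                                   \<and> \<phi> (\<lambda>x. h x * g x) = \<phi> h * \<phi> g)
    \<and> (\<forall>c. \<forall>h\<in>HX X r B. \<phi> (\<lambda>x. c * h x) = c * \<phi> h)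
    \<and> (\<exists>h\<in>HX X r B. \<phi> h \<noteq> 0)}"

text \<open>The relative Stone-Cech compactification: the spectrum of H_X with the weak-* topology.\<close>
definition betaB :: "'a topology \<Rightarrow> ('a \<Rightarrow> 'b) \<Rightarrow> 'b topology \<Rightarrow> (('a \<Rightarrow> complex) \<Rightarrow> complex) topology" where
  "betaB X r B = subtopology (product_topology (\<lambda>_. euclidean) (HX X r B)) (chars X r B)"

definition iota :: "'a topology \<Rightarrow> ('a \<Rightarrow> 'b) \<Rightarrow> 'b topology \<Rightarrow> 'a \<Rightarrow> (('a \<Rightarrow> complex) \<Rightarrow> complex)" where
  "iota X r B x = restrict (\<lambda>h. h x) (HX X r B)"

end

theory Submission
  imports Defs
begin

(*
  The inverse of ~f is the transpose of the pullback g^* along g = f^-1. Pulling back along f maps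
  H_X2 into H_X1 because f0 is proper, so v o f0 still vanishes at infinity on B1. Pulling back along
  g maps H_X1 into H_X2 because B2 is locally compact Hausdorff: up to a small error, a factor v o r1
  can be replaced by w o f0 o r1 with w an Urysohn function on B2. Hence g^* is an isomorphism of
  algebras H_X1 -> H_X2, and its transpose is a continuous map between the spectra which, like ~f,
  commutes with the canonical maps from the points.

  Points are dense in the spectrum. If a character phi stayed away from every point evaluation on
  finitely many h, a sum of squares would give t in H_X with phi t = 1 while |1 - t| is bounded
  below on X; then t / (1 - t) lies in the ideal H_X of C_b(X), which is incompatible with
  multiplicativity of phi. Consequently both composites of ~f and the transpose fix all points and
  are the identity.
*)

section \<open>Bounded continuous functions and functions vanishing at infinity\<close>

lemma continuous_map_mult:
  fixes f g :: "'a \<Rightarrow> 'b::real_normed_algebra"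
  shows "continuous_map X euclidean f \<Longrightarrow> continuous_map X euclidean g
    \<Longrightarrow> continuous_map X euclidean (\<lambda>x. f x * g x)"
  by (simp add: continuous_map_atin tendsto_mult)

lemma continuous_map_cnj:
  "continuous_map X euclidean f \<Longrightarrow> continuous_map X euclidean (\<lambda>x. cnj (f x))"
  by (simp add: continuous_map_atin tendsto_cnj)

lemma continuous_map_inverse:
  fixes f :: "'a \<Rightarrow> 'b::real_normed_div_algebra"
  shows "continuous_map X euclidean f \<Longrightarrow> (\<And>x. x \<in> topspace X \<Longrightarrow> f x \<noteq> 0)
    \<Longrightarrow> continuous_map X euclidean (\<lambda>x. inverse (f x))"
  by (simp add: continuous_map_atin tendsto_inverse)

lemma continuous_map_of_real:
  "continuous_map X euclideanreal g
    \<Longrightarrow> continuous_map X euclidean (\<lambda>x. of_real (g x) :: 'b::real_normed_algebra_1)"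
  by (simp add: continuous_map_atin tendsto_of_real)

lemma continuous_map_in_topspace: "continuous_map X Y f \<Longrightarrow> x \<in> topspace X \<Longrightarrow> f x \<in> topspace Y"
  by (meson continuous_map_image_subset_topspace image_subset_iff)

(* Extended by 0 off the topspace, following the normalisation of Cb. *)
definition pullback :: "'a topology \<Rightarrow> ('a \<Rightarrow> 'b) \<Rightarrow> ('b \<Rightarrow> complex) \<Rightarrow> 'a \<Rightarrow> complex" where
  "pullback X f h = (\<lambda>x. if x \<in> topspace X then h (f x) else 0)"

lemma pullback_add: "pullback X f (\<lambda>y. g y + h y) = (\<lambda>x. pullback X f g x + pullback X f h x)"
  and pullback_mult: "pullback X f (\<lambda>y. g y * h y) = (\<lambda>x. pullback X f g x * pullback X f h x)"
  and pullback_scale: "pullback X f (\<lambda>y. c * g y) = (\<lambda>x. c * pullback X f g x)"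
  by (auto simp: pullback_def)

lemma pullback_pullback_inverse:
  assumes "g ` topspace Y \<subseteq> topspace X" "\<And>y. y \<in> topspace Y \<Longrightarrow> f (g y) = y"
    and "\<And>y. y \<notin> topspace Y \<Longrightarrow> h y = 0"
  shows "pullback Y g (pullback X f h) = h"
  using assms by (force simp: pullback_def)

lemma Cb_continuous_map: "u \<in> Cb X \<Longrightarrow> continuous_map X euclidean u"
  by (simp add: Cb_def)

lemma Cb_outside: "u \<in> Cb X \<Longrightarrow> x \<notin> topspace X \<Longrightarrow> u x = 0"
  by (simp add: Cb_def)

lemma CbI:
  "continuous_map X euclidean u \<Longrightarrow> (\<And>x. x \<in> topspace X \<Longrightarrow> norm (u x) \<le> M)
    \<Longrightarrow> (\<And>x. x \<notin> topspace X \<Longrightarrow> u x = 0) \<Longrightarrow> u \<in> Cb X"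
  by (auto simp: Cb_def)

lemma Cb_boundedE:
  assumes "u \<in> Cb X"
  obtains M where "M > 0" "\<And>x. norm (u x) \<le> M"
proof -
  obtain M where "\<forall>x\<in>topspace X. norm (u x) \<le> M"
    using assms by (auto simp: Cb_def)
  then have "norm (u x) \<le> max M 1" for x
    using Cb_outside[OF assms, of x] by (cases "x \<in> topspace X") auto
  then show thesis
    using that[of "max M 1"] by simp
qed

lemma Cb_zero: "(\<lambda>x. 0) \<in> Cb X"
  by (rule CbI[where M=0]) simp_all

lemma Cb_add:
  assumes "u \<in> Cb X" "w \<in> Cb X"
  shows "(\<lambda>x. u x + w x) \<in> Cb X"
proof -
  obtain M1 M2 where M: "\<And>x. norm (u x) \<le> M1" "\<And>x. norm (w x) \<le> M2"
    using Cb_boundedE[OF assms(1)] Cb_boundedE[OF assms(2)] by metis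
  show ?thesis
  proof (rule CbI[where M="M1 + M2"])
    show "continuous_map X euclidean (\<lambda>x. u x + w x)"
      using assms by (intro continuous_map_add Cb_continuous_map)
    show "norm (u x + w x) \<le> M1 + M2" for x
      by (rule norm_triangle_le[OF add_mono[OF M]])
  qed (simp add: Cb_outside[OF assms(1)] Cb_outside[OF assms(2)])
qed

lemma Cb_mult:
  assumes "u \<in> Cb X" "w \<in> Cb X"
  shows "(\<lambda>x. u x * w x) \<in> Cb X"
proof -
  obtain M1 M2 where M: "\<And>x. norm (u x) \<le> M1" "\<And>x. norm (w x) \<le> M2" "M1 > 0"
    using Cb_boundedE[OF assms(1)] Cb_boundedE[OF assms(2)] by metis
  show ?thesis
  proof (rule CbI[where M="M1 * M2"])
    show "continuous_map X euclidean (\<lambda>x. u x * w x)"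
      using assms by (intro continuous_map_mult Cb_continuous_map)
    show "norm (u x * w x) \<le> M1 * M2" for x
      unfolding norm_mult using M(3) by (intro mult_mono M(1,2)) simp_all
  qed (simp add: Cb_outside[OF assms(1)] Cb_outside[OF assms(2)])
qed

lemma Cb_cnj: "u \<in> Cb X \<Longrightarrow> (\<lambda>x. cnj (u x)) \<in> Cb X"
  by (auto simp: Cb_def continuous_map_cnj)

lemma Cb_restricted_const: "(\<lambda>x. if x \<in> topspace X then c else 0) \<in> Cb X"
proof (rule CbI[where M="norm c"])
  show "continuous_map X euclidean (\<lambda>x. if x \<in> topspace X then c else 0)"
    by (rule continuous_map_eq[of X euclidean "\<lambda>x. c"]) simp_all
qed simp_all

lemma Cb_pullback:
  assumes "u \<in> Cb Y" "continuous_map X Y f"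
  shows "pullback X f u \<in> Cb X"
proof -
  obtain M where M: "\<And>y. norm (u y) \<le> M"
    using Cb_boundedE[OF assms(1)] by metis
  show ?thesis
  proof (rule CbI[where M=M])
    show "continuous_map X euclidean (pullback X f u)"
      unfolding pullback_def
      by (rule continuous_map_eq[OF continuous_map_compose[OF assms(2) Cb_continuous_map[OF assms(1)]]])
        simp
  qed (simp_all add: pullback_def M)
qed

lemma C0_continuous_map: "v \<in> C0 B \<Longrightarrow> continuous_map B euclidean v"
  by (simp add: C0_def)

lemma C0_outside: "v \<in> C0 B \<Longrightarrow> b \<notin> topspace B \<Longrightarrow> v b = 0"
  by (simp add: C0_def)

lemma C0_compactin: "v \<in> C0 B \<Longrightarrow> e > 0 \<Longrightarrow> compactin B {b \<in> topspace B. e \<le> norm (v b)}"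
  by (simp add: C0_def)

lemma C0_subset_Cb: "C0 B \<subseteq> Cb B"
proof
  fix v assume v: "v \<in> C0 B"
  have "compactin euclideanreal ((\<lambda>b. norm (v b)) ` {b \<in> topspace B. 1 \<le> norm (v b)})"
    using C0_compactin[OF v] C0_continuous_map[OF v]
    by (intro image_compactin continuous_map_norm) auto
  then obtain M where M: "\<And>b. b \<in> topspace B \<Longrightarrow> 1 \<le> norm (v b) \<Longrightarrow> norm (v b) \<le> M"
    by (fastforce dest: compact_imp_bounded simp: bounded_iff)
  have "norm (v b) \<le> max M 1" if "b \<in> topspace B" for b
    using M[OF that] by (metis le_max_iff_disj nle_le)
  then show "v \<in> Cb B"
    using v by (intro CbI[where M="max M 1"] C0_continuous_map) (simp_all add: C0_outside)
qed

lemma C0_cnj: "v \<in> C0 B \<Longrightarrow> (\<lambda>b. cnj (v b)) \<in> C0 B"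
  by (auto simp: C0_def continuous_map_cnj)

lemma C0_pullback_proper:
  assumes v: "v \<in> C0 B2" and f0: "continuous_map B1 B2 f0"
    and proper: "\<forall>K. compactin B2 K \<longrightarrow> compactin B1 {b \<in> topspace B1. f0 b \<in> K}"
  shows "pullback B1 f0 v \<in> C0 B1"
  unfolding C0_def mem_Collect_eq
proof (intro conjI allI impI)
  show "continuous_map B1 euclidean (pullback B1 f0 v)"
    using Cb_pullback[OF set_mp[OF C0_subset_Cb v] f0] by (rule Cb_continuous_map)
  fix e :: real assume "e > 0"
  have "{b \<in> topspace B1. e \<le> norm (pullback B1 f0 v b)}
      = {b \<in> topspace B1. f0 b \<in> {c \<in> topspace B2. e \<le> norm (v c)}}"
    using f0 by (auto simp: pullback_def continuous_map_in_topspace)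
  moreover have "compactin B1 {b \<in> topspace B1. f0 b \<in> {c \<in> topspace B2. e \<le> norm (v c)}}"
    using proper C0_compactin[OF v \<open>e > 0\<close>] by blast
  ultimately show "compactin B1 {b \<in> topspace B1. e \<le> norm (pullback B1 f0 v b)}"
    by (simp only:)
qed (simp add: pullback_def)

lemma C0_Urysohn:
  assumes "Hausdorff_space B" "locally_compact_space B" "compactin B K"
  obtains w where "w \<in> C0 B" "\<And>b. b \<in> K \<Longrightarrow> w b = 1" "\<And>b. norm (1 - w b) \<le> 1"
proof -
  obtain U L where U: "openin B U" "compactin B L" "closedin B L" "K \<subseteq> U" "U \<subseteq> L"
    using assms locally_compact_space_compact_closed_compact by metis
  have "completely_regular_space B"
    using assms locally_compact_regular_imp_completely_regular_space by blast
  moreover have "closedin B (topspace B - U)" "disjnt K (topspace B - U)"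
    using U by (auto simp: disjnt_def)
  ultimately obtain g where g: "continuous_map B (subtopology euclidean {0..1::real}) g"
    "g ` (topspace B - U) \<subseteq> {0}" "g ` K \<subseteq> {1}"
    using Urysohn_completely_regular_compact_closed[of 0 1 B K] assms(3) by auto
  have gc: "continuous_map B euclideanreal g" and g01: "\<And>b. b \<in> topspace B \<Longrightarrow> g b \<in> {0..1}"
    using g(1) unfolding continuous_map_in_subtopology by auto
  define w where "w = pullback B id (\<lambda>b. complex_of_real (g b))"
  have wc: "continuous_map B euclidean w"
    unfolding w_def pullback_def by (rule continuous_map_eq[OF continuous_map_of_real[OF gc]]) simp
  have "compactin B {b \<in> topspace B. e \<le> norm (w b)}" if "e > 0" for e
  proof (rule closed_compactin[OF U(2)])
    show "{b \<in> topspace B. e \<le> norm (w b)} \<subseteq> L"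
      using that g(2) U(5) by (force simp: w_def pullback_def)
    show "closedin B {b \<in> topspace B. e \<le> norm (w b)}"
      using closedin_continuous_map_preimage[OF continuous_map_norm[OF wc], of "{e..}"] by simp
  qed
  then have "w \<in> C0 B"
    using wc by (simp add: C0_def w_def pullback_def)
  moreover have "w b = 1" if "b \<in> K" for b
    using that g(3) compactin_subset_topspace[OF assms(3)] by (auto simp: w_def pullback_def)
  moreover have "norm (1 - w b) \<le> 1" for b
  proof (cases "b \<in> topspace B")
    case True
    then have "norm (1 - w b) = \<bar>1 - g b\<bar>"
      by (metis w_def pullback_def id_apply norm_of_real of_real_1 of_real_diff)
    then show ?thesis
      using g01[OF True] by simp
  qed (simp add: w_def pullback_def)
  ultimately show thesis
    using that by blast
qed

section \<open>The algebra HX\<close>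

lemma HX_Cb: "h \<in> HX X r B \<Longrightarrow> h \<in> Cb X"
  by (simp add: HX_def)

lemma HX_outside: "h \<in> HX X r B \<Longrightarrow> x \<notin> topspace X \<Longrightarrow> h x = 0"
  by (rule Cb_outside[OF HX_Cb])

lemma HXE:
  assumes "h \<in> HX X r B" "e > 0"
  obtains n :: nat and u v where "\<forall>i<n. u i \<in> Cb X \<and> v i \<in> C0 B"
    "\<forall>x\<in>topspace X. norm (h x - (\<Sum>i<n. u i x * v i (r x))) < e"
  using assms(1)[unfolded HX_def, THEN CollectD, THEN conjunct2, rule_format, OF assms(2)] by blast

lemma HXI:
  assumes "h \<in> Cb X"
    and "\<And>e. e > 0 \<Longrightarrow> \<exists>(n::nat) u v. (\<forall>i<n. u i \<in> Cb X \<and> v i \<in> C0 B) \<and>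
       (\<forall>x\<in>topspace X. norm (h x - (\<Sum>i<n. u i x * v i (r x))) < e)"
  shows "h \<in> HX X r B"
  using assms unfolding HX_def by simp

lemma HX_cong:
  assumes "\<And>x. x \<in> topspace X \<Longrightarrow> r x = r' x"
  shows "HX X r B = HX X r' B"
  using assms unfolding HX_def by (simp cong: ball_cong)

lemma HX_closedI:
  assumes h: "h \<in> Cb X"
    and approx: "\<And>e. e > 0 \<Longrightarrow> \<exists>g\<in>HX X r B. \<forall>x\<in>topspace X. norm (h x - g x) < e"
  shows "h \<in> HX X r B"
proof (rule HXI[OF h])
  fix e :: real assume "e > 0"
  then obtain g where g: "g \<in> HX X r B" and hg: "\<And>x. x \<in> topspace X \<Longrightarrow> norm (h x - g x) < e/2"
    using approx[of "e/2"] by auto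
  obtain n :: nat and u v where uv: "\<forall>i<n. u i \<in> Cb X \<and> v i \<in> C0 B"
    and gs: "\<forall>x\<in>topspace X. norm (g x - (\<Sum>i<n. u i x * v i (r x))) < e/2"
    by (rule HXE[OF g, where e="e/2"]) (use \<open>e > 0\<close> in simp)
  have "norm (h x - (\<Sum>i<n. u i x * v i (r x))) < e" if "x \<in> topspace X" for x
    using norm_triangle_lt[of "h x - g x" "g x - (\<Sum>i<n. u i x * v i (r x))" e]
      hg[OF that] gs[rule_format, OF that] by simp
  with uv show "\<exists>(n::nat) u v. (\<forall>i<n. u i \<in> Cb X \<and> v i \<in> C0 B) \<and>
       (\<forall>x\<in>topspace X. norm (h x - (\<Sum>i<n. u i x * v i (r x))) < e)"
    by blast
qed

lemma HX_zero: "(\<lambda>x. 0) \<in> HX X r B"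
  by (rule HXI[OF Cb_zero]) (rule exI[of _ 0], simp)

lemma HX_product:
  assumes u: "u \<in> Cb X" and v: "v \<in> C0 B" and r: "continuous_map X B r"
  shows "(\<lambda>x. u x * v (r x)) \<in> HX X r B"
proof (rule HXI)
  have "(\<lambda>x. u x * v (r x)) = (\<lambda>x. u x * pullback X r v x)"
    using Cb_outside[OF u] by (auto simp: pullback_def)
  then show "(\<lambda>x. u x * v (r x)) \<in> Cb X"
    using Cb_mult[OF u Cb_pullback[OF set_mp[OF C0_subset_Cb v] r]] by simp
  show "\<exists>(n::nat) u' v'. (\<forall>i<n. u' i \<in> Cb X \<and> v' i \<in> C0 B) \<and>
       (\<forall>x\<in>topspace X. norm (u x * v (r x) - (\<Sum>i<n. u' i x * v' i (r x))) < e)" if "e > 0" for e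
  proof (intro exI conjI)
    show "\<forall>i<1::nat. u \<in> Cb X \<and> v \<in> C0 B"
      using u v by simp
    show "\<forall>x\<in>topspace X. norm (u x * v (r x) - (\<Sum>i<1::nat. u x * v (r x))) < e"
      using that by simp
  qed
qed

lemma sum_lessThan_add: "(\<Sum>i<m + n. f i) = (\<Sum>i<m. f i) + (\<Sum>i<n. f (m + i :: nat))"
  by (induct n) (auto simp: add.assoc)

lemma HX_add:
  assumes h: "h \<in> HX X r B" and g: "g \<in> HX X r B"
  shows "(\<lambda>x. h x + g x) \<in> HX X r B"
proof (rule HXI[OF Cb_add[OF HX_Cb[OF h] HX_Cb[OF g]]])
  fix e :: real assume "e > 0"
  obtain n1 :: nat and u1 v1 where uv1: "\<forall>i<n1. u1 i \<in> Cb X \<and> v1 i \<in> C0 B"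
    and h1: "\<forall>x\<in>topspace X. norm (h x - (\<Sum>i<n1. u1 i x * v1 i (r x))) < e/2"
    by (rule HXE[OF h, where e="e/2"]) (use \<open>e > 0\<close> in simp)
  obtain n2 :: nat and u2 v2 where uv2: "\<forall>i<n2. u2 i \<in> Cb X \<and> v2 i \<in> C0 B"
    and g2: "\<forall>x\<in>topspace X. norm (g x - (\<Sum>i<n2. u2 i x * v2 i (r x))) < e/2"
    by (rule HXE[OF g, where e="e/2"]) (use \<open>e > 0\<close> in simp)
  define u where "u i = (if i < n1 then u1 i else u2 (i - n1))" for i
  define v where "v i = (if i < n1 then v1 i else v2 (i - n1))" for i
  have "norm (h x + g x - (\<Sum>i<n1 + n2. u i x * v i (r x))) < e" if "x \<in> topspace X" for x
  proof -
    have "h x + g x - (\<Sum>i<n1 + n2. u i x * v i (r x))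
        = (h x - (\<Sum>i<n1. u1 i x * v1 i (r x))) + (g x - (\<Sum>i<n2. u2 i x * v2 i (r x)))"
      by (simp add: sum_lessThan_add u_def v_def)
    then show ?thesis
      using norm_triangle_lt[of "h x - (\<Sum>i<n1. u1 i x * v1 i (r x))"
          "g x - (\<Sum>i<n2. u2 i x * v2 i (r x))" e]
        h1[rule_format, OF that] g2[rule_format, OF that] by (simp only:)
  qed
  moreover have "\<forall>i<n1 + n2. u i \<in> Cb X \<and> v i \<in> C0 B"
    using uv1 uv2 by (simp add: u_def v_def)
  ultimately show "\<exists>(n::nat) u v. (\<forall>i<n. u i \<in> Cb X \<and> v i \<in> C0 B) \<and>
       (\<forall>x\<in>topspace X. norm (h x + g x - (\<Sum>i<n. u i x * v i (r x))) < e)"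
    by blast
qed

lemma HX_sum:
  assumes "finite I" "\<And>i. i \<in> I \<Longrightarrow> g i \<in> HX X r B"
  shows "(\<lambda>x. \<Sum>i\<in>I. g i x) \<in> HX X r B"
  using assms by (induction I rule: finite_induct) (simp_all add: HX_zero HX_add)

lemma HX_mult_Cb:
  assumes w: "w \<in> Cb X" and h: "h \<in> HX X r B"
  shows "(\<lambda>x. w x * h x) \<in> HX X r B"
proof (rule HXI[OF Cb_mult[OF w HX_Cb[OF h]]])
  fix e :: real assume "e > 0"
  obtain M where M: "M > 0" "\<And>x. norm (w x) \<le> M"
    using Cb_boundedE[OF w] by metis
  obtain n :: nat and u v where uv: "\<forall>i<n. u i \<in> Cb X \<and> v i \<in> C0 B"
    and hs: "\<forall>x\<in>topspace X. norm (h x - (\<Sum>i<n. u i x * v i (r x))) < e / M"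
    by (rule HXE[OF h, where e="e/M"]) (use \<open>e > 0\<close> M(1) in simp)
  have "norm (w x * h x - (\<Sum>i<n. w x * u i x * v i (r x))) < e" if "x \<in> topspace X" for x
  proof -
    have "norm (w x * h x - (\<Sum>i<n. w x * u i x * v i (r x)))
        = norm (w x) * norm (h x - (\<Sum>i<n. u i x * v i (r x)))"
      by (simp add: sum_distrib_left right_diff_distrib mult.assoc flip: norm_mult)
    also have "\<dots> \<le> M * norm (h x - (\<Sum>i<n. u i x * v i (r x)))"
      by (rule mult_right_mono[OF M(2)]) simp
    also have "\<dots> < M * (e / M)"
      using M(1) hs that by (intro mult_strict_left_mono) auto
    finally show ?thesis
      using M(1) by simp
  qed
  moreover have "\<forall>i<n. (\<lambda>x. w x * u i x) \<in> Cb X \<and> v i \<in> C0 B"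
    using uv w by (simp add: Cb_mult)
  ultimately show "\<exists>(n::nat) u v. (\<forall>i<n. u i \<in> Cb X \<and> v i \<in> C0 B) \<and>
       (\<forall>x\<in>topspace X. norm (w x * h x - (\<Sum>i<n. u i x * v i (r x))) < e)"
    by (intro exI[of _ n] exI[of _ "\<lambda>i x. w x * u i x"] exI[of _ v]) (simp add: mult.assoc)
qed

lemma HX_mult: "h \<in> HX X r B \<Longrightarrow> g \<in> HX X r B \<Longrightarrow> (\<lambda>x. h x * g x) \<in> HX X r B"
  by (rule HX_mult_Cb[OF HX_Cb])

lemma HX_scale:
  assumes h: "h \<in> HX X r B"
  shows "(\<lambda>x. c * h x) \<in> HX X r B"
proof -
  have "(\<lambda>x. c * h x) = (\<lambda>x. (if x \<in> topspace X then c else 0) * h x)"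
    using HX_outside[OF h] by auto
  then show ?thesis
    using HX_mult_Cb[OF Cb_restricted_const h] by simp
qed

lemma HX_diff: "h \<in> HX X r B \<Longrightarrow> g \<in> HX X r B \<Longrightarrow> (\<lambda>x. h x - g x) \<in> HX X r B"
  using HX_add[OF _ HX_scale[of g X r B "-1"]] by simp

lemma HX_cnj:
  assumes h: "h \<in> HX X r B"
  shows "(\<lambda>x. cnj (h x)) \<in> HX X r B"
proof (rule HXI[OF Cb_cnj[OF HX_Cb[OF h]]])
  fix e :: real assume "e > 0"
  then obtain n :: nat and u v where "\<forall>i<n. u i \<in> Cb X \<and> v i \<in> C0 B"
    and "\<forall>x\<in>topspace X. norm (h x - (\<Sum>i<n. u i x * v i (r x))) < e"
    by (rule HXE[OF h, where e=e])
  then show "\<exists>(n::nat) u v. (\<forall>i<n. u i \<in> Cb X \<and> v i \<in> C0 B) \<and>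
       (\<forall>x\<in>topspace X. norm (cnj (h x) - (\<Sum>i<n. u i x * v i (r x))) < e)"
    by (intro exI[of _ n] exI[of _ "\<lambda>i x. cnj (u i x)"] exI[of _ "\<lambda>i b. cnj (v i b)"])
      (simp add: Cb_cnj C0_cnj flip: complex_cnj_mult cnj_sum complex_cnj_diff)
qed

lemma HX_subsetI:
  assumes r: "continuous_map X B r"
    and products: "\<And>u v. u \<in> Cb X \<Longrightarrow> v \<in> C0 B \<Longrightarrow> (\<lambda>x. u x * v (r x)) \<in> HX X r' B'"
  shows "HX X r B \<subseteq> HX X r' B'"
proof
  fix h assume h: "h \<in> HX X r B"
  show "h \<in> HX X r' B'"
  proof (rule HX_closedI[OF HX_Cb[OF h]])
    fix e :: real assume "e > 0"
    then obtain n :: nat and u v where "\<forall>i<n. u i \<in> Cb X \<and> v i \<in> C0 B"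
      and "\<forall>x\<in>topspace X. norm (h x - (\<Sum>i<n. u i x * v i (r x))) < e"
      by (rule HXE[OF h, where e=e])
    then show "\<exists>g\<in>HX X r' B'. \<forall>x\<in>topspace X. norm (h x - g x) < e"
      by (intro bexI[of _ "\<lambda>x. \<Sum>i<n. u i x * v i (r x)"] HX_sum products) simp_all
  qed
qed

section \<open>Pullback and change of base\<close>

lemma HX_pullback:
  assumes f: "continuous_map X Y f" and h: "h \<in> HX Y r B"
  shows "pullback X f h \<in> HX X (\<lambda>x. r (f x)) B"
proof (rule HXI[OF Cb_pullback[OF HX_Cb[OF h] f]])
  fix e :: real assume "e > 0"
  then obtain n :: nat and u v where uv: "\<forall>i<n. u i \<in> Cb Y \<and> v i \<in> C0 B"
    and hs: "\<forall>y\<in>topspace Y. norm (h y - (\<Sum>i<n. u i y * v i (r y))) < e"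
    by (rule HXE[OF h, where e=e])
  have "\<forall>x\<in>topspace X. norm (pullback X f h x - (\<Sum>i<n. pullback X f (u i) x * v i (r (f x)))) < e"
    using hs continuous_map_in_topspace[OF f] by (simp add: pullback_def)
  moreover have "\<forall>i<n. pullback X f (u i) \<in> Cb X \<and> v i \<in> C0 B"
    using uv Cb_pullback[OF _ f] by simp
  ultimately show "\<exists>(n::nat) u v. (\<forall>i<n. u i \<in> Cb X \<and> v i \<in> C0 B) \<and>
      (\<forall>x\<in>topspace X. norm (pullback X f h x - (\<Sum>i<n. u i x * v i (r (f x)))) < e)"
    by (intro exI[of _ n] exI[of _ "\<lambda>i. pullback X f (u i)"] exI[of _ v] conjI)
qed

lemma HX_base_change_proper:
  assumes r: "continuous_map X B1 r" and f0: "continuous_map B1 B2 f0"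
    and proper: "\<forall>K. compactin B2 K \<longrightarrow> compactin B1 {b \<in> topspace B1. f0 b \<in> K}"
  shows "HX X (\<lambda>x. f0 (r x)) B2 \<subseteq> HX X r B1"
proof (rule HX_subsetI)
  show "continuous_map X B2 (\<lambda>x. f0 (r x))"
    using continuous_map_compose[OF r f0] by (simp add: o_def)
  fix u v assume u: "u \<in> Cb X" and v: "v \<in> C0 B2"
  have "(\<lambda>x. u x * v (f0 (r x))) = (\<lambda>x. u x * pullback B1 f0 v (r x))"
  proof
    show "u x * v (f0 (r x)) = u x * pullback B1 f0 v (r x)" for x
      by (cases "x \<in> topspace X")
        (simp_all add: Cb_outside[OF u] continuous_map_in_topspace[OF r] pullback_def)
  qed
  then show "(\<lambda>x. u x * v (f0 (r x))) \<in> HX X r B1"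
    using HX_product[OF u C0_pullback_proper[OF v f0 proper] r] by simp
qed

lemma C0_base_change_approx:
  assumes u: "u \<in> Cb X" and v: "v \<in> C0 B1" and "\<delta> > 0"
    and r: "continuous_map X B1 r" and f0: "continuous_map B1 B2 f0"
    and "Hausdorff_space B2" "locally_compact_space B2"
  obtains u' w where "u' \<in> Cb X" "w \<in> C0 B2"
    "\<And>x. x \<in> topspace X \<Longrightarrow> norm (u x * v (r x) - u' x * w (f0 (r x))) < \<delta>"
proof -
  obtain M where M: "M > 0" "\<And>x. norm (u x) \<le> M"
    using Cb_boundedE[OF u] by metis
  define K where "K = {b \<in> topspace B1. \<delta> / M \<le> norm (v b)}"
  have "compactin B2 (f0 ` K)"
    unfolding K_def using C0_compactin[OF v] \<open>\<delta> > 0\<close> M(1) by (intro image_compactin[OF _ f0]) simp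
  \<comment> \<open>Off \<open>K\<close> the product is already below \<open>\<delta>\<close>; on \<open>K\<close> the factor \<open>1 - w\<close> vanishes.\<close>
  then obtain w where w: "w \<in> C0 B2" "\<And>b. b \<in> f0 ` K \<Longrightarrow> w b = 1" "\<And>b. norm (1 - w b) \<le> 1"
    using C0_Urysohn assms(6,7) by metis
  define u' where "u' = (\<lambda>x. u x * pullback X r v x)"
  have "norm (u x * v (r x) - u' x * w (f0 (r x))) < \<delta>" if x: "x \<in> topspace X" for x
  proof -
    have eq: "u x * v (r x) - u' x * w (f0 (r x)) = u x * v (r x) * (1 - w (f0 (r x)))"
      using x by (simp add: u'_def pullback_def algebra_simps)
    show ?thesis
    proof (cases "r x \<in> K")
      case True
      then show ?thesis
        using eq w(2) \<open>\<delta> > 0\<close> by simp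
    next
      case False
      then have small: "norm (v (r x)) < \<delta> / M"
        using continuous_map_in_topspace[OF r x] by (auto simp: K_def)
      have "norm (u x * v (r x) * (1 - w (f0 (r x)))) \<le> M * norm (v (r x)) * 1"
        unfolding norm_mult using M w(3) by (intro mult_mono) auto
      also have "\<dots> < M * (\<delta> / M)"
        by (simp only: mult_1_right) (rule mult_strict_left_mono[OF small M(1)])
      finally show ?thesis
        using eq M(1) by simp
    qed
  qed
  moreover have "u' \<in> Cb X"
    unfolding u'_def using Cb_mult[OF u Cb_pullback[OF set_mp[OF C0_subset_Cb v] r]] .
  ultimately show thesis
    using that w(1) by blast
qed

lemma HX_base_change_locally_compact:
  assumes r: "continuous_map X B1 r" and f0: "continuous_map B1 B2 f0"
    and "Hausdorff_space B2" "locally_compact_space B2"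
  shows "HX X r B1 \<subseteq> HX X (\<lambda>x. f0 (r x)) B2"
proof (rule HX_subsetI[OF r])
  have fr: "continuous_map X B2 (\<lambda>x. f0 (r x))"
    using continuous_map_compose[OF r f0] by (simp add: o_def)
  fix u v assume u: "u \<in> Cb X" and v: "v \<in> C0 B1"
  show "(\<lambda>x. u x * v (r x)) \<in> HX X (\<lambda>x. f0 (r x)) B2"
  proof (rule HX_closedI[OF HX_Cb[OF HX_product[OF u v r]]])
    fix e :: real assume "e > 0"
    then obtain u' w where "u' \<in> Cb X" "w \<in> C0 B2"
      "\<And>x. x \<in> topspace X \<Longrightarrow> norm (u x * v (r x) - u' x * w (f0 (r x))) < e"
      using C0_base_change_approx[OF u v _ r f0 assms(3,4)] by metis
    then show "\<exists>g\<in>HX X (\<lambda>x. f0 (r x)) B2. \<forall>x\<in>topspace X. norm (u x * v (r x) - g x) < e"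
      by (intro bexI[of _ "\<lambda>x. u' x * w (f0 (r x))"] ballI HX_product[OF _ _ fr])
  qed
qed

lemma HX_pullback_over_proper:
  assumes f: "continuous_map X1 X2 f" and r1: "continuous_map X1 B1 r1"
    and f0: "continuous_map B1 B2 f0"
    and proper: "\<forall>K. compactin B2 K \<longrightarrow> compactin B1 {b \<in> topspace B1. f0 b \<in> K}"
    and over: "\<forall>x\<in>topspace X1. r2 (f x) = f0 (r1 x)"
    and h: "h \<in> HX X2 r2 B2"
  shows "pullback X1 f h \<in> HX X1 r1 B1"
proof -
  have "pullback X1 f h \<in> HX X1 (\<lambda>x. r2 (f x)) B2"
    by (rule HX_pullback[OF f h])
  also have "\<dots> = HX X1 (\<lambda>x. f0 (r1 x)) B2"
    using over by (intro HX_cong) simp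
  also have "\<dots> \<subseteq> HX X1 r1 B1"
    by (rule HX_base_change_proper[OF r1 f0 proper])
  finally show ?thesis .
qed

lemma HX_pullback_over_locally_compact:
  assumes g: "continuous_map X2 X1 g" and r1: "continuous_map X1 B1 r1"
    and f0: "continuous_map B1 B2 f0"
    and "Hausdorff_space B2" "locally_compact_space B2"
    and over: "\<forall>y\<in>topspace X2. r2 y = f0 (r1 (g y))"
    and h: "h \<in> HX X1 r1 B1"
  shows "pullback X2 g h \<in> HX X2 r2 B2"
proof -
  have "h \<in> HX X1 (\<lambda>x. f0 (r1 x)) B2"
    using HX_base_change_locally_compact[OF r1 f0 assms(4,5)] h ..
  then have "pullback X2 g h \<in> HX X2 (\<lambda>y. f0 (r1 (g y))) B2"
    by (rule HX_pullback[OF g])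
  also have "\<dots> = HX X2 r2 B2"
    using over by (intro HX_cong) simp
  finally show ?thesis .
qed

section \<open>Characters are approximated by point evaluations\<close>

lemma chars_add:
    "\<phi> \<in> chars X r B \<Longrightarrow> h \<in> HX X r B \<Longrightarrow> g \<in> HX X r B \<Longrightarrow> \<phi> (\<lambda>x. h x + g x) = \<phi> h + \<phi> g"
  and chars_mult:
    "\<phi> \<in> chars X r B \<Longrightarrow> h \<in> HX X r B \<Longrightarrow> g \<in> HX X r B \<Longrightarrow> \<phi> (\<lambda>x. h x * g x) = \<phi> h * \<phi> g"
  and chars_scale:
    "\<phi> \<in> chars X r B \<Longrightarrow> h \<in> HX X r B \<Longrightarrow> \<phi> (\<lambda>x. c * h x) = c * \<phi> h"
  and chars_nonzero: "\<phi> \<in> chars X r B \<Longrightarrow> \<exists>h\<in>HX X r B. \<phi> h \<noteq> 0"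
  by (simp_all add: chars_def)

lemma chars_diff:
  assumes "\<phi> \<in> chars X r B" "h \<in> HX X r B" "g \<in> HX X r B"
  shows "\<phi> (\<lambda>x. h x - g x) = \<phi> h - \<phi> g"
  using chars_add[OF assms(1,2) HX_scale[OF assms(3), of "-1"]] chars_scale[OF assms(1,3), of "-1"]
  by simp

lemma chars_sum:
  assumes \<phi>: "\<phi> \<in> chars X r B" and "finite I" "\<And>i. i \<in> I \<Longrightarrow> g i \<in> HX X r B"
  shows "\<phi> (\<lambda>x. \<Sum>i\<in>I. g i x) = (\<Sum>i\<in>I. \<phi> (g i))"
  using assms(2,3)
proof (induction I rule: finite_induct)
  case empty
  obtain h where "h \<in> HX X r B"
    using chars_nonzero[OF \<phi>] by blast
  then show ?case
    using chars_scale[OF \<phi>, of h 0] by simp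
next
  case (insert i I)
  then show ?case
    using chars_add[OF \<phi> _ HX_sum[of I g]] by simp
qed

lemma chars_attains_one:
  assumes \<phi>: "\<phi> \<in> chars X r B"
  obtains h where "h \<in> HX X r B" "\<phi> h = 1"
proof -
  obtain h where h: "h \<in> HX X r B" "\<phi> h \<noteq> 0"
    using chars_nonzero[OF \<phi>] by blast
  have "\<phi> (\<lambda>x. (1 / \<phi> h) * h x) = (1 / \<phi> h) * \<phi> h"
    by (rule chars_scale[OF \<phi> h(1)])
  also have "\<dots> = 1"
    using h(2) by simp
  finally show thesis
    by (rule that[OF HX_scale[OF h(1)]])
qed

lemma chars_eq_one_near_one:
  assumes \<phi>: "\<phi> \<in> chars X r B" and t: "t \<in> HX X r B" and "\<phi> t = 1" and "c > 0"
  obtains x where "x \<in> topspace X" "norm (1 - t x) < c"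
proof -
  have False if low: "\<And>x. x \<in> topspace X \<Longrightarrow> c \<le> norm (1 - t x)"
  proof -
    have nz: "1 - t x \<noteq> 0" if "x \<in> topspace X" for x
      using low[OF that] \<open>c > 0\<close> by auto
    define w where "w x = (if x \<in> topspace X then inverse (1 - t x) else 0)" for x
    have "w \<in> Cb X"
    proof (rule CbI[where M="1/c"])
      have "continuous_map X euclidean (\<lambda>x. 1 - t x)"
        by (intro continuous_map_diff continuous_map_canonical_const Cb_continuous_map[OF HX_Cb[OF t]])
      then show "continuous_map X euclidean w"
        by (rule continuous_map_eq[OF continuous_map_inverse[OF _ nz]]) (simp_all add: w_def)
      show "norm (w x) \<le> 1/c" if "x \<in> topspace X" for x
      proof -
        have "norm (w x) = inverse (norm (1 - t x))"
          using that by (simp add: w_def norm_inverse)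
        also have "\<dots> \<le> inverse c"
          by (rule le_imp_inverse_le[OF low[OF that] \<open>c > 0\<close>])
        finally show ?thesis
          by (simp add: inverse_eq_divide)
      qed
    qed (simp add: w_def)
    \<comment> \<open>\<open>t / (1 - t)\<close> lies in the ideal \<open>HX\<close> of \<open>Cb X\<close> and equals \<open>t + t\<^sup>2 / (1 - t)\<close>.\<close>
    then have q: "(\<lambda>x. w x * t x) \<in> HX X r B"
      using HX_mult_Cb t by blast
    have "(\<lambda>x. w x * t x) = (\<lambda>x. t x + (\<lambda>x. w x * t x) x * t x)"
    proof
      fix x show "w x * t x = t x + w x * t x * t x"
        using nz[of x] HX_outside[OF t, of x] by (cases "x \<in> topspace X") (simp_all add: w_def field_simps)
    qed
    then have "\<phi> (\<lambda>x. w x * t x) = \<phi> t + \<phi> (\<lambda>x. w x * t x) * \<phi> t"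
      using chars_add[OF \<phi> t HX_mult[OF q t]] chars_mult[OF \<phi> q t] by metis
    then show False
      using \<open>\<phi> t = 1\<close> by simp
  qed
  then show thesis
    using that by (meson not_le)
qed

lemma chars_sum_of_squares:
  assumes \<phi>: "\<phi> \<in> chars X r B" and F: "finite F" "\<And>i. i \<in> F \<Longrightarrow> g i \<in> HX X r B"
    and ker: "\<And>i. i \<in> F \<Longrightarrow> \<phi> (g i) = 0"
    and u: "u \<in> HX X r B" "\<phi> u = 1"
  defines "s \<equiv> \<lambda>x. u x + cnj (u x) - u x * cnj (u x) - (\<Sum>i\<in>F. g i x * cnj (g i x))"
  shows "s \<in> HX X r B" "\<phi> s = 1"
    and "1 - s x = complex_of_real (norm (1 - u x) ^ 2 + (\<Sum>i\<in>F. norm (g i x) ^ 2))"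
proof -
  define a where "a x = u x + cnj (u x) - u x * cnj (u x)" for x
  define b where "b x = (\<Sum>i\<in>F. g i x * cnj (g i x))" for x
  have s: "s = (\<lambda>x. a x - b x)"
    by (simp add: s_def a_def b_def)
  have a: "a \<in> HX X r B"
    unfolding a_def using u(1) by (intro HX_diff HX_add HX_mult HX_cnj)
  have b: "b \<in> HX X r B"
    unfolding b_def by (intro HX_sum[OF F(1)] HX_mult HX_cnj F(2))
  show "s \<in> HX X r B"
    unfolding s by (rule HX_diff[OF a b])
  have "\<phi> a = 1"
    unfolding a_def using u chars_add[OF \<phi> u(1) HX_cnj[OF u(1)]] chars_mult[OF \<phi> u(1) HX_cnj[OF u(1)]]
      chars_diff[OF \<phi> HX_add[OF u(1) HX_cnj[OF u(1)]] HX_mult[OF u(1) HX_cnj[OF u(1)]]]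
    by simp
  moreover have "\<phi> b = (\<Sum>i\<in>F. \<phi> (\<lambda>x. g i x * cnj (g i x)))"
    unfolding b_def by (intro chars_sum[OF \<phi> F(1)] HX_mult HX_cnj F(2))
  then have "\<phi> b = 0"
    using chars_mult[OF \<phi> F(2) HX_cnj[OF F(2)]] ker by simp
  ultimately show "\<phi> s = 1"
    unfolding s using chars_diff[OF \<phi> a b] by simp
  have "1 - s x = (1 - u x) * cnj (1 - u x) + (\<Sum>i\<in>F. g i x * cnj (g i x))"
    by (simp add: s_def algebra_simps)
  also have "\<dots> = complex_of_real (norm (1 - u x) ^ 2 + (\<Sum>i\<in>F. norm (g i x) ^ 2))"
    by (simp add: complex_norm_square flip: of_real_power)
  finally show "1 - s x = complex_of_real (norm (1 - u x) ^ 2 + (\<Sum>i\<in>F. norm (g i x) ^ 2))" .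
qed

lemma chars_simultaneously_small:
  assumes \<phi>: "\<phi> \<in> chars X r B" and F: "finite F" "\<And>i. i \<in> F \<Longrightarrow> g i \<in> HX X r B"
    and ker: "\<And>i. i \<in> F \<Longrightarrow> \<phi> (g i) = 0"
    and u: "u \<in> HX X r B" "\<phi> u = 1" and "\<eta> > 0"
  obtains x where "x \<in> topspace X" "norm (1 - u x) < \<eta>" "\<And>i. i \<in> F \<Longrightarrow> norm (g i x) < \<eta>"
proof -
  define s where "s = (\<lambda>x. u x + cnj (u x) - u x * cnj (u x) - (\<Sum>i\<in>F. g i x * cnj (g i x)))"
  define R where "R x = norm (1 - u x) ^ 2 + (\<Sum>i\<in>F. norm (g i x) ^ 2)" for x
  note sos = chars_sum_of_squares[where g=g and u=u, OF \<phi> F ker u]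
  have s: "s \<in> HX X r B" "\<phi> s = 1" "\<And>x. 1 - s x = complex_of_real (R x)"
    using sos by (simp_all only: s_def R_def)
  obtain x where x: "x \<in> topspace X" and close: "norm (1 - s x) < \<eta> ^ 2"
    using chars_eq_one_near_one[OF \<phi> s(1,2)] \<open>\<eta> > 0\<close> by (metis zero_less_power)
  have "R x \<ge> 0"
    by (simp add: R_def sum_nonneg)
  then have "R x < \<eta> ^ 2"
    using close s(3)[of x] by (metis abs_of_nonneg norm_of_real)
  moreover have "norm (1 - u x) ^ 2 \<le> R x"
    by (simp add: R_def sum_nonneg)
  moreover have "norm (g i x) ^ 2 \<le> R x" if "i \<in> F" for i
    unfolding R_def using member_le_sum[OF that, of "\<lambda>i. norm (g i x) ^ 2"] F(1)
    by (intro add_increasing) simp_all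
  moreover have "y < \<eta>" if "y \<ge> 0" "y ^ 2 \<le> R x" for y :: real
  proof (rule power_less_imp_less_base)
    show "y ^ 2 < \<eta> ^ 2"
      using that(2) \<open>R x < \<eta> ^ 2\<close> by linarith
  qed (use \<open>\<eta> > 0\<close> in simp)
  ultimately show thesis
    using that[OF x] by simp
qed

lemma chars_approx_by_evaluations:
  assumes \<phi>: "\<phi> \<in> chars X r B" and F: "finite F" "F \<subseteq> HX X r B" and "\<epsilon> > 0"
  obtains x where "x \<in> topspace X" "\<exists>h\<in>HX X r B. h x \<noteq> 0"
    "\<And>h. h \<in> F \<Longrightarrow> norm (h x - \<phi> h) < \<epsilon>"
proof -
  obtain u where u: "u \<in> HX X r B" "\<phi> u = 1"
    using chars_attains_one[OF \<phi>] by blast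
  define C where "C = 1 + (\<Sum>h\<in>F. norm (\<phi> h))"
  have C: "1 + norm (\<phi> h) \<le> C" if "h \<in> F" for h
    using member_le_sum[OF that, of "\<lambda>h. norm (\<phi> h)"] F(1) by (simp add: C_def)
  have "C \<ge> 1"
    by (simp add: C_def sum_nonneg)
  define \<eta> where "\<eta> = min 1 (\<epsilon> / C)"
  have \<eta>: "\<eta> > 0" "\<eta> \<le> 1" "\<eta> * C \<le> \<epsilon>"
    using \<open>\<epsilon> > 0\<close> \<open>C \<ge> 1\<close> by (auto simp: \<eta>_def min_def field_simps)
  define g where "g h = (\<lambda>x. h x - \<phi> h * u x)" for h
  have g: "g h \<in> HX X r B" "\<phi> (g h) = 0" if "h \<in> F" for h
  proof -
    have h: "h \<in> HX X r B"
      using that F(2) by blast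
    show "g h \<in> HX X r B"
      unfolding g_def by (rule HX_diff[OF h HX_scale[OF u(1)]])
    show "\<phi> (g h) = 0"
      unfolding g_def using chars_diff[OF \<phi> h HX_scale[OF u(1)]] chars_scale[OF \<phi> u(1)] u(2) by simp
  qed
  obtain x where x: "x \<in> topspace X" and near: "norm (1 - u x) < \<eta>"
    and small: "\<And>h. h \<in> F \<Longrightarrow> norm (g h x) < \<eta>"
    using chars_simultaneously_small[where g=g, OF \<phi> F(1) g u \<eta>(1)] by blast
  have "u x \<noteq> 0"
    using near \<eta>(2) by auto
  moreover have "norm (h x - \<phi> h) < \<epsilon>" if "h \<in> F" for h
  proof -
    have "h x - \<phi> h = g h x - \<phi> h * (1 - u x)"
      by (simp add: g_def algebra_simps)
    then have "norm (h x - \<phi> h) \<le> norm (g h x) + norm (\<phi> h) * norm (1 - u x)"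
      by (metis norm_mult norm_triangle_ineq4)
    also have "\<dots> < \<eta> + norm (\<phi> h) * \<eta>"
      using small[OF that] near by (intro add_less_le_mono mult_left_mono) auto
    also have "\<dots> \<le> \<eta> * C"
      using mult_right_mono[OF C[OF that] less_imp_le[OF \<eta>(1)]] by (simp add: algebra_simps)
    finally show ?thesis
      using \<eta>(3) by simp
  qed
  ultimately show thesis
    using that x u(1) by blast
qed

section \<open>The spectrum betaB\<close>

lemma iota_in_chars:
  assumes "x \<in> topspace X" "h \<in> HX X r B" "h x \<noteq> 0"
  shows "iota X r B x \<in> chars X r B"
  using assms by (auto simp: chars_def iota_def HX_add HX_mult HX_scale)

lemma topspace_betaB: "topspace (betaB X r B) = chars X r B"
  by (auto simp: betaB_def chars_def)

lemma Hausdorff_betaB: "Hausdorff_space (betaB X r B)"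
  unfolding betaB_def
  by (rule Hausdorff_space_subtopology) (simp add: Hausdorff_space_product_topology)

lemma openin_product_topology_ball:
  fixes \<phi> :: "'i \<Rightarrow> 'b::metric_space"
  assumes "openin (product_topology (\<lambda>_. euclidean) I) T" "\<phi> \<in> T"
  obtains F \<epsilon> where "finite F" "F \<subseteq> I" "\<epsilon> > 0"
    "\<And>\<psi>. \<psi> \<in> extensional I \<Longrightarrow> (\<And>i. i \<in> F \<Longrightarrow> dist (\<psi> i) (\<phi> i) < \<epsilon>) \<Longrightarrow> \<psi> \<in> T"
proof -
  obtain U where U: "finite {i \<in> I. U i \<noteq> topspace euclidean}" "\<forall>i\<in>I. openin euclidean (U i)"
    "\<phi> \<in> PiE I U" "PiE I U \<subseteq> T"
    using assms unfolding openin_product_topology_alt by blast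
  define F where "F = {i \<in> I. U i \<noteq> UNIV}"
  have "\<exists>e>0. ball (\<phi> i) e \<subseteq> U i" if "i \<in> F" for i
    using that U(2,3) by (intro open_contains_ball_eq[THEN iffD1, rule_format]) (auto simp: F_def PiE_iff)
  then obtain E where E: "\<And>i. i \<in> F \<Longrightarrow> E i > 0 \<and> ball (\<phi> i) (E i) \<subseteq> U i"
    by metis
  define \<epsilon> where "\<epsilon> = Min (insert 1 (E ` F))"
  have F: "finite F"
    using U(1) by (simp add: F_def)
  show thesis
  proof (rule that[of F \<epsilon>])
    show "\<epsilon> > 0"
      using F E by (simp add: \<epsilon>_def)
    fix \<psi> assume \<psi>: "\<psi> \<in> extensional I" "\<And>i. i \<in> F \<Longrightarrow> dist (\<psi> i) (\<phi> i) < \<epsilon>"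
    have "\<psi> i \<in> U i" if "i \<in> I" for i
    proof (cases "i \<in> F")
      case True
      have "\<epsilon> \<le> E i"
        using F True by (simp add: \<epsilon>_def)
      then show ?thesis
        using E[OF True] \<psi>(2)[OF True] by (auto simp: dist_commute)
    qed (use that in \<open>simp add: F_def\<close>)
    then have "\<psi> \<in> PiE I U"
      using \<psi>(1) by (simp add: PiE_iff)
    then show "\<psi> \<in> T"
      using U(4) by blast
  qed (use F in \<open>auto simp: F_def\<close>)
qed

lemma betaB_closure_of_iota: "betaB X r B closure_of (iota X r B ` topspace X) = topspace (betaB X r B)"
proof
  show "betaB X r B closure_of (iota X r B ` topspace X) \<subseteq> topspace (betaB X r B)"
    by (rule closure_of_subset_topspace)
  show "topspace (betaB X r B) \<subseteq> betaB X r B closure_of (iota X r B ` topspace X)"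
  proof
    fix \<phi> assume \<phi>_top: "\<phi> \<in> topspace (betaB X r B)"
    then have \<phi>: "\<phi> \<in> chars X r B"
      by (simp add: topspace_betaB)
    show "\<phi> \<in> betaB X r B closure_of (iota X r B ` topspace X)"
      unfolding in_closure_of
    proof (intro conjI allI impI)
      fix W assume W: "\<phi> \<in> W \<and> openin (betaB X r B) W"
      obtain T where T: "openin (product_topology (\<lambda>_. euclidean) (HX X r B)) T" "W = T \<inter> chars X r B"
        using W unfolding betaB_def openin_subtopology by blast
      have "\<phi> \<in> T"
        using W T(2) by blast
      then obtain F \<epsilon> where F: "finite F" "F \<subseteq> HX X r B" "\<epsilon> > 0" and nbhd:
        "\<And>\<psi>. \<psi> \<in> extensional (HX X r B) \<Longrightarrow> (\<And>h. h \<in> F \<Longrightarrow> dist (\<psi> h) (\<phi> h) < \<epsilon>)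
          \<Longrightarrow> \<psi> \<in> T"
        by (rule openin_product_topology_ball[OF T(1)]) blast
      obtain x where x: "x \<in> topspace X" "\<exists>h\<in>HX X r B. h x \<noteq> 0"
        and close: "\<And>h. h \<in> F \<Longrightarrow> norm (h x - \<phi> h) < \<epsilon>"
        by (rule chars_approx_by_evaluations[OF \<phi> F]) blast
      have "iota X r B x \<in> T"
      proof (rule nbhd)
        show "iota X r B x \<in> extensional (HX X r B)"
          by (simp add: iota_def)
        fix h assume "h \<in> F"
        then show "dist (iota X r B x h) (\<phi> h) < \<epsilon>"
          using F(2) close by (auto simp: iota_def dist_norm)
      qed
      moreover have "iota X r B x \<in> chars X r B"
        using iota_in_chars[OF x(1)] x(2) by blast
      ultimately show "\<exists>y. y \<in> iota X r B ` topspace X \<and> y \<in> W"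
        using x(1) T(2) by blast
    qed (rule \<phi>_top)
  qed
qed

lemma betaB_continuous_maps_eq:
  assumes "continuous_map (betaB X r B) Y g1" "continuous_map (betaB X r B) Y g2" "Hausdorff_space Y"
    and "\<And>x. x \<in> topspace X \<Longrightarrow> g1 (iota X r B x) = g2 (iota X r B x)"
    and "p \<in> topspace (betaB X r B)"
  shows "g1 p = g2 p"
  using forall_in_closure_of_eq[of p "betaB X r B" "iota X r B ` topspace X" Y g1 g2] assms
  by (auto simp: betaB_closure_of_iota)

lemma continuous_map_betaB_transpose:
  assumes into: "\<And>g. g \<in> HX X1 r1 B1 \<Longrightarrow> \<Phi> g \<in> HX X2 r2 B2"
    and onto: "\<And>h. h \<in> HX X2 r2 B2 \<Longrightarrow> \<exists>g\<in>HX X1 r1 B1. \<Phi> g = h"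
    and add: "\<And>g g'. \<Phi> (\<lambda>x. g x + g' x) = (\<lambda>y. \<Phi> g y + \<Phi> g' y)"
    and mult: "\<And>g g'. \<Phi> (\<lambda>x. g x * g' x) = (\<lambda>y. \<Phi> g y * \<Phi> g' y)"
    and scale: "\<And>c g. \<Phi> (\<lambda>x. c * g x) = (\<lambda>y. c * \<Phi> g y)"
  shows "continuous_map (betaB X2 r2 B2) (betaB X1 r1 B1) (\<lambda>\<psi>. restrict (\<lambda>g. \<psi> (\<Phi> g)) (HX X1 r1 B1))"
proof -
  have chars: "restrict (\<lambda>g. \<psi> (\<Phi> g)) (HX X1 r1 B1) \<in> chars X1 r1 B1"
    if \<psi>: "\<psi> \<in> chars X2 r2 B2" for \<psi>
  proof -
    obtain h where h: "h \<in> HX X2 r2 B2" "\<psi> h \<noteq> 0"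
      using chars_nonzero[OF \<psi>] by blast
    with onto obtain g where "g \<in> HX X1 r1 B1" "\<psi> (\<Phi> g) \<noteq> 0"
      by metis
    then show ?thesis
      unfolding chars_def mem_Collect_eq
    proof (intro conjI ballI allI bexI)
      fix g g' assume g: "g \<in> HX X1 r1 B1" and g': "g' \<in> HX X1 r1 B1"
      show "restrict (\<lambda>g. \<psi> (\<Phi> g)) (HX X1 r1 B1) (\<lambda>x. g x + g' x)
          = restrict (\<lambda>g. \<psi> (\<Phi> g)) (HX X1 r1 B1) g + restrict (\<lambda>g. \<psi> (\<Phi> g)) (HX X1 r1 B1) g'"
        using g g' HX_add[OF g g'] chars_add[OF \<psi> into into] by (simp add: add)
      show "restrict (\<lambda>g. \<psi> (\<Phi> g)) (HX X1 r1 B1) (\<lambda>x. g x * g' x)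
          = restrict (\<lambda>g. \<psi> (\<Phi> g)) (HX X1 r1 B1) g * restrict (\<lambda>g. \<psi> (\<Phi> g)) (HX X1 r1 B1) g'"
        using g g' HX_mult[OF g g'] chars_mult[OF \<psi> into into] by (simp add: mult)
    next
      fix c g assume g: "g \<in> HX X1 r1 B1"
      show "restrict (\<lambda>g. \<psi> (\<Phi> g)) (HX X1 r1 B1) (\<lambda>x. c * g x)
          = c * restrict (\<lambda>g. \<psi> (\<Phi> g)) (HX X1 r1 B1) g"
        using g HX_scale[OF g] chars_scale[OF \<psi> into] by (simp add: scale)
    qed simp_all
  qed
  have "continuous_map (betaB X2 r2 B2) euclidean (\<lambda>\<psi>. \<psi> (\<Phi> g))" if "g \<in> HX X1 r1 B1" for g
    unfolding betaB_def
    by (intro continuous_map_from_subtopology continuous_map_product_projection into that)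
  then show ?thesis
    using chars unfolding betaB_def continuous_map_in_subtopology continuous_map_componentwise
    by (auto simp: topspace_betaB[unfolded betaB_def])
qed

lemma iota_pullback:
  assumes "y \<in> topspace Y" "\<And>g. g \<in> HX X r B \<Longrightarrow> pullback Y f g \<in> HX Y r' B'"
  shows "restrict (\<lambda>g. iota Y r' B' y (pullback Y f g)) (HX X r B) = iota X r B (f y)"
  using assms by (auto simp: iota_def pullback_def)

lemma homeomorphic_maps_betaB:
  assumes F: "continuous_map (betaB X1 r1 B1) (betaB X2 r2 B2) F"
    and G: "continuous_map (betaB X2 r2 B2) (betaB X1 r1 B1) G"
    and fg: "homeomorphic_maps X1 X2 f g"
    and F_iota: "\<And>x. x \<in> topspace X1 \<Longrightarrow> F (iota X1 r1 B1 x) = iota X2 r2 B2 (f x)"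
    and G_iota: "\<And>y. y \<in> topspace X2 \<Longrightarrow> G (iota X2 r2 B2 y) = iota X1 r1 B1 (g y)"
  shows "homeomorphic_maps (betaB X1 r1 B1) (betaB X2 r2 B2) F G"
proof -
  have f: "continuous_map X1 X2 f" and g: "continuous_map X2 X1 g"
    and gf: "\<And>x. x \<in> topspace X1 \<Longrightarrow> g (f x) = x"
    and fg': "\<And>y. y \<in> topspace X2 \<Longrightarrow> f (g y) = y"
    using fg by (auto simp: homeomorphic_maps_def)
  have "(G \<circ> F) p = id p" if "p \<in> topspace (betaB X1 r1 B1)" for p
  proof (rule betaB_continuous_maps_eq[OF continuous_map_compose[OF F G] continuous_map_id
        Hausdorff_betaB _ that])
    fix x assume x: "x \<in> topspace X1"
    show "(G \<circ> F) (iota X1 r1 B1 x) = id (iota X1 r1 B1 x)"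
      using F_iota[OF x] G_iota[OF continuous_map_in_topspace[OF f x]] gf[OF x] by simp
  qed
  moreover have "(F \<circ> G) q = id q" if "q \<in> topspace (betaB X2 r2 B2)" for q
  proof (rule betaB_continuous_maps_eq[OF continuous_map_compose[OF G F] continuous_map_id
        Hausdorff_betaB _ that])
    fix y assume y: "y \<in> topspace X2"
    show "(F \<circ> G) (iota X2 r2 B2 y) = id (iota X2 r2 B2 y)"
      using G_iota[OF y] F_iota[OF continuous_map_in_topspace[OF g y]] fg'[OF y] by simp
  qed
  ultimately show ?thesis
    unfolding homeomorphic_maps_def using F G by simp
qed

theorem lemma4p15:
  fixes X1 :: "'a topology" and X2 :: "'b topology"
    and B1 :: "'c topology" and B2 :: "'d topology"
    and f :: "'a \<Rightarrow> 'b" and r1 :: "'a \<Rightarrow> 'c" and r2 :: "'b \<Rightarrow> 'd" and f0 :: "'c \<Rightarrow> 'd"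
    and \<rho>1 :: "(('a \<Rightarrow> complex) \<Rightarrow> complex) \<Rightarrow> 'c"
    and \<rho>2 :: "(('b \<Rightarrow> complex) \<Rightarrow> complex) \<Rightarrow> 'd"
    and ft :: "(('a \<Rightarrow> complex) \<Rightarrow> complex) \<Rightarrow> (('b \<Rightarrow> complex) \<Rightarrow> complex)"
  assumes "continuous_map X1 X2 f" and "continuous_map X1 B1 r1"
    and "continuous_map X2 B2 r2" and "continuous_map B1 B2 f0"
    and "\<forall>x\<in>topspace X1. r2 (f x) = f0 (r1 x)"
    and "Hausdorff_space B1" and "locally_compact_space B1"
    and "Hausdorff_space B2" and "locally_compact_space B2"
    and "\<forall>K. compactin B2 K \<longrightarrow> compactin B1 {b \<in> topspace B1. f0 b \<in> K}"
    \<comment> \<open>rho1, rho2 are the maps beta_{B_j} r_j\<close>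
    and "continuous_map (betaB X1 r1 B1) B1 \<rho>1"
    and "\<forall>x\<in>topspace X1. \<rho>1 (iota X1 r1 B1 x) = r1 x"
    and "continuous_map (betaB X2 r2 B2) B2 \<rho>2"
    and "\<forall>x\<in>topspace X2. \<rho>2 (iota X2 r2 B2 x) = r2 x"
    \<comment> \<open>ft is the induced map tilde f\<close>
    and "continuous_map (betaB X1 r1 B1) (betaB X2 r2 B2) ft"
    and "\<forall>x\<in>topspace X1. ft (iota X1 r1 B1 x) = iota X2 r2 B2 (f x)"
    and "\<forall>p\<in>topspace (betaB X1 r1 B1). \<rho>2 (ft p) = f0 (\<rho>1 p)"
    and "homeomorphic_map X1 X2 f"
  shows "homeomorphic_map (betaB X1 r1 B1) (betaB X2 r2 B2) ft"
proof -
  obtain g where fg: "homeomorphic_maps X1 X2 f g"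
    using assms(18) homeomorphic_map_maps by blast
  then have g: "continuous_map X2 X1 g" and f_g: "\<forall>y\<in>topspace X2. f (g y) = y"
    by (auto simp: homeomorphic_maps_def)
  have over: "\<forall>y\<in>topspace X2. r2 y = f0 (r1 (g y))"
    using assms(5) f_g continuous_map_in_topspace[OF g] by metis
  have pull_f: "pullback X1 f h \<in> HX X1 r1 B1" if "h \<in> HX X2 r2 B2" for h
    using HX_pullback_over_proper[OF assms(1,2,4,10,5) that] .
  have pull_g: "pullback X2 g h \<in> HX X2 r2 B2" if "h \<in> HX X1 r1 B1" for h
    using HX_pullback_over_locally_compact[OF g assms(2,4,8,9) over that] .
  have onto: "\<exists>h'\<in>HX X1 r1 B1. pullback X2 g h' = h" if "h \<in> HX X2 r2 B2" for h
  proof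
    show "pullback X2 g (pullback X1 f h) = h"
      using f_g continuous_map_image_subset_topspace[OF g] HX_outside[OF that]
      by (intro pullback_pullback_inverse) auto
  qed (rule pull_f[OF that])
  define G :: "(('b \<Rightarrow> complex) \<Rightarrow> complex) \<Rightarrow> ('a \<Rightarrow> complex) \<Rightarrow> complex"
    where "G \<psi> = restrict (\<lambda>h. \<psi> (pullback X2 g h)) (HX X1 r1 B1)" for \<psi>
  have "continuous_map (betaB X2 r2 B2) (betaB X1 r1 B1) G"
    unfolding G_def
    by (rule continuous_map_betaB_transpose[OF pull_g onto pullback_add pullback_mult pullback_scale])
  moreover have "G (iota X2 r2 B2 y) = iota X1 r1 B1 (g y)" if "y \<in> topspace X2" for y
    unfolding G_def by (rule iota_pullback[OF that pull_g])
  ultimately have "homeomorphic_maps (betaB X1 r1 B1) (betaB X2 r2 B2) ft G"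
    using homeomorphic_maps_betaB[OF assms(15) _ fg assms(16)[rule_format]] by blast
  then show ?thesis
    using homeomorphic_map_maps by blast
qed

end
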